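(* Let $\mathsf V$ be a class of monotone views and let $\mathcal D$ be a probabilistic database such that there exist two facts $f_1,f_2$, each of positive marginal probability in $\mathcal D$, that are mutually exclusive, i.e. $\Pr_{D\sim\mathcal D}(f_1\in D\text{ and }f_2\in D)=0$. Then $\mathcal D\notin\mathsf V(\mathsf{TI})$.
   Context: Fix a countably infinite universe $U$. Facts are $R(u_1,\dots,u_{\mathrm{ar}(R)})$ with $R$ from a finite schema and $u_i\in U$; instances are finite sets of facts. A probabilistic database (PDB) is a discrete probability space $(\mathbb D,P)$ with $\mathbb D$ a nonempty countable set of instances; the marginal probability of a fact $f$ is $\Pr_{D\sim\mathcal D}(f\in D)$. A PDB $\mathcal I$ is tuple-independent if for all pairwise distinct facts $f_1,\dots,f_k$, $\Pr(f_1\in I,\dots,f_k\in I)=\prod_i\Pr(f_i\in I)$; $\mathsf{TI}$ is the class of these. A view is a function $V$ from instances of an input schema to instances of an output schema; it is monotone if $D\subseteq D'$ implies $V(D)\subseteq V(D')$. The image of a PDB $(\mathbb D,P)$ under $V$ is the PDB on $V(\mathbb D)$ with $P'(\{D'\})=P(\{D:V(D)=D'\})$; $\mathsf V(\mathsf{TI})$ is the class of images of TI-PDBs under views from $\mathsf V$. *)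

theory Defs
  imports "HOL-Probability.Probability_Mass_Function" "HOL-Library.Countable"
begin

type_synonym ('r, 'u) fact = "'r \<times> 'u list"

definition schema :: "'r set \<Rightarrow> ('r \<Rightarrow> nat) \<Rightarrow> bool" where
  "schema S ar \<longleftrightarrow> finite S"

definition facts :: "'r set \<Rightarrow> ('r \<Rightarrow> nat) \<Rightarrow> ('r, 'u) fact set" where
  "facts S ar = {(R, us). R \<in> S \<and> length us = ar R}"

definition instances :: "'r set \<Rightarrow> ('r \<Rightarrow> nat) \<Rightarrow> ('r, 'u) fact set set" where
  "instances S ar = {D. finite D \<and> D \<subseteq> facts S ar}"

text \<open>A PDB over a schema: a discrete probability distribution (its support is
automatically countable) on instances of the schema.\<close>

definition pdb :: "'r set \<Rightarrow> ('r \<Rightarrow> nat) \<Rightarrow> ('r, 'u) fact set pmf \<Rightarrow> bool" where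
  "pdb S ar P \<longleftrightarrow> set_pmf P \<subseteq> instances S ar"

definition marginal :: "('r, 'u) fact set pmf \<Rightarrow> ('r, 'u) fact \<Rightarrow> real" where
  "marginal P f = measure_pmf.prob P {D. f \<in> D}"

definition tuple_independent :: "('r, 'u) fact set pmf \<Rightarrow> bool" where
  "tuple_independent P \<longleftrightarrow>
     (\<forall>F. finite F \<longrightarrow> measure_pmf.prob P {D. F \<subseteq> D} = (\<Prod>f\<in>F. marginal P f))"

definition TI :: "'r set \<Rightarrow> ('r \<Rightarrow> nat) \<Rightarrow> ('r, 'u) fact set pmf set" where
  "TI S ar = {P. pdb S ar P \<and> tuple_independent P}"

definition is_view ::
  "'r set \<Rightarrow> ('r \<Rightarrow> nat) \<Rightarrow> 's set \<Rightarrow> ('s \<Rightarrow> nat)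
     \<Rightarrow> (('r, 'u) fact set \<Rightarrow> ('s, 'u) fact set) \<Rightarrow> bool" where
  "is_view S1 ar1 S2 ar2 V \<longleftrightarrow> (\<forall>D \<in> instances S1 ar1. V D \<in> instances S2 ar2)"

definition monotone_view ::
  "'r set \<Rightarrow> ('r \<Rightarrow> nat) \<Rightarrow> 's set \<Rightarrow> ('s \<Rightarrow> nat)
     \<Rightarrow> (('r, 'u) fact set \<Rightarrow> ('s, 'u) fact set) \<Rightarrow> bool" where
  "monotone_view S1 ar1 S2 ar2 V \<longleftrightarrow> is_view S1 ar1 S2 ar2 V \<and>
     (\<forall>D \<in> instances S1 ar1. \<forall>D' \<in> instances S1 ar1. D \<subseteq> D' \<longrightarrow> V D \<subseteq> V D')"

definition image_pdb :: "('a \<Rightarrow> 'b) \<Rightarrow> 'a pmf \<Rightarrow> 'b pmf" where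
  "image_pdb V P = map_pmf V P"

definition views_of_TI ::
  "'r set \<Rightarrow> ('r \<Rightarrow> nat) \<Rightarrow> (('r, 'u) fact set \<Rightarrow> ('s, 'u) fact set) set
     \<Rightarrow> ('s, 'u) fact set pmf set" where
  "views_of_TI S1 ar1 Vs = {image_pdb V I | V I. V \<in> Vs \<and> I \<in> TI S1 ar1}"

end

theory Submission
  imports Defs
begin

text \<open>In a tuple-independent PDB every fact of positive marginal probability
occurs in some possible world, and any finitely many such facts occur together
in one possible world, since their joint probability is the product of their
marginals.  Hence any two possible worlds lie below a common third one.  A
monotone view maps this common upper bound to a world of the image containing
every fact that either of the two images contains; so two facts of positive
marginal probability in the image are jointly possible, i.e. never mutually
exclusive.\<close>

lemma marginal_pos_iff: "marginal P f > 0 \<longleftrightarrow> (\<exists>D\<in>set_pmf P. f \<in> D)"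
proof
  assume "marginal P f > 0"
  then have "set_pmf P \<inter> {D. f \<in> D} \<noteq> {}"
    unfolding marginal_def by (simp add: measure_pmf_zero_iff[symmetric])
  then show "\<exists>D\<in>set_pmf P. f \<in> D" by blast
qed (auto simp: marginal_def intro: measure_pmf_posI)

lemma tuple_independent_joint_world:
  assumes "tuple_independent P" and "finite F"
    and "\<And>f. f \<in> F \<Longrightarrow> \<exists>D\<in>set_pmf P. f \<in> D"
  shows "\<exists>E\<in>set_pmf P. F \<subseteq> E"
proof -
  have "measure_pmf.prob P {D. F \<subseteq> D} = (\<Prod>f\<in>F. marginal P f)"
    using assms(1,2) unfolding tuple_independent_def by blast
  also have "\<dots> > 0"
    using assms(3) by (intro prod_pos) (simp add: marginal_pos_iff)
  finally have "set_pmf P \<inter> {D. F \<subseteq> D} \<noteq> {}"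
    by (simp add: measure_pmf_zero_iff[symmetric])
  then show ?thesis by blast
qed

lemma tuple_independent_common_upper_world:
  assumes "tuple_independent P"
    and "D1 \<in> set_pmf P" "D2 \<in> set_pmf P" "finite D1" "finite D2"
  obtains E where "E \<in> set_pmf P" "D1 \<subseteq> E" "D2 \<subseteq> E"
  using tuple_independent_joint_world[of P "D1 \<union> D2"] assms by blast

lemma mono_image_not_mutually_exclusive:
  assumes upper: "\<And>D1 D2. D1 \<in> set_pmf P \<Longrightarrow> D2 \<in> set_pmf P \<Longrightarrow>
      \<exists>E\<in>set_pmf P. D1 \<subseteq> E \<and> D2 \<subseteq> E"
    and mono: "\<And>D D'. D \<in> set_pmf P \<Longrightarrow> D' \<in> set_pmf P \<Longrightarrow> D \<subseteq> D' \<Longrightarrow> V D \<subseteq> V D'"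
    and "marginal (map_pmf V P) f1 > 0" "marginal (map_pmf V P) f2 > 0"
  shows "measure_pmf.prob (map_pmf V P) {D. f1 \<in> D \<and> f2 \<in> D} > 0"
proof -
  obtain D1 D2 where D1: "D1 \<in> set_pmf P" "f1 \<in> V D1" and D2: "D2 \<in> set_pmf P" "f2 \<in> V D2"
    using assms(3,4) by (auto simp: marginal_pos_iff)
  then obtain E where E: "E \<in> set_pmf P" "D1 \<subseteq> E" "D2 \<subseteq> E"
    using upper by blast
  have "f1 \<in> V E" "f2 \<in> V E"
    using mono[OF D1(1) E(1,2)] mono[OF D2(1) E(1,3)] D1 D2 by auto
  then show ?thesis
    using E(1) by (intro measure_pmf_posI[of "V E"]) auto
qed

theorem proposition6p5:
  fixes S1 :: "'r set" and ar1 :: "'r \<Rightarrow> nat"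
    and S2 :: "'s set" and ar2 :: "'s \<Rightarrow> nat"
    and Vs :: "(('r, 'u::countable) fact set \<Rightarrow> ('s, 'u) fact set) set"
    and \<D> :: "('s, 'u) fact set pmf"
    and f1 f2 :: "('s, 'u) fact"
  assumes "infinite (UNIV :: 'u set)"
    and "schema S1 ar1" and "schema S2 ar2"
    and "\<forall>V \<in> Vs. monotone_view S1 ar1 S2 ar2 V"
    and "pdb S2 ar2 \<D>"
    and "marginal \<D> f1 > 0" and "marginal \<D> f2 > 0"
    and "measure_pmf.prob \<D> {D. f1 \<in> D \<and> f2 \<in> D} = 0"
  shows "\<D> \<notin> views_of_TI S1 ar1 Vs"
proof
  assume "\<D> \<in> views_of_TI S1 ar1 Vs"
  then obtain V I where V: "V \<in> Vs" and I: "I \<in> TI S1 ar1" and \<D>_eq: "\<D> = map_pmf V I"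
    unfolding views_of_TI_def image_pdb_def by auto
  have worlds: "set_pmf I \<subseteq> instances S1 ar1" and ti: "tuple_independent I"
    using I unfolding TI_def pdb_def by auto
  have "measure_pmf.prob (map_pmf V I) {D. f1 \<in> D \<and> f2 \<in> D} > 0"
  proof (rule mono_image_not_mutually_exclusive)
    fix D1 D2 assume D12: "D1 \<in> set_pmf I" "D2 \<in> set_pmf I"
    moreover have "finite D1" "finite D2"
      using D12 worlds unfolding instances_def by auto
    ultimately show "\<exists>E\<in>set_pmf I. D1 \<subseteq> E \<and> D2 \<subseteq> E"
      by (metis tuple_independent_common_upper_world[OF ti])
  next
    fix D D' assume "D \<in> set_pmf I" "D' \<in> set_pmf I" "D \<subseteq> D'"
    then show "V D \<subseteq> V D'"
      using assms(4) V worlds unfolding monotone_view_def by (meson subsetD)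
  next
    show "marginal (map_pmf V I) f1 > 0" "marginal (map_pmf V I) f2 > 0"
      using assms(6,7) by (simp_all only: \<D>_eq)
  qed
  then show False
    using assms(8) by (simp only: \<D>_eq less_irrefl)
qed
end
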